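(* Consider two $K$-tier open access networks as described in the context, identical (same point processes $\Phi_k$, powers $P_k$, target SIRs $\beta_k$, path loss exponent $\alpha$) and with the same number of antennas $M_k$ in each tier $k$, where in the first network tier $k$ serves $\Psi_k$ users and in the second $\Psi'_k$ users, with $\Psi_k\le\Psi'_k\le M_k$ for all $k$. Then the coverage probability of the first network is greater than or equal to that of the second.
   Context: Downlink $K$-tier cellular network with tiers indexed by $\mathcal{K}=\{1,\dots,K\}$. Tier-$k$ base stations (BSs) are located at the points of a stationary point process $\Phi_k\subset\mathbb{R}^2$ (not necessarily independent across tiers), transmit with per-user power $P_k>0$, have target SIR $\beta_k>0$, have $M_k$ antennas and serve $\Psi_k\le M_k$ users per resource block (positive integers); set $\Delta_k=M_k-\Psi_k+1$. $\alpha$ is the path loss exponent; a typical user is at the origin. Each BS at $x\in\Phi_k$ carries channel-power marks $h_{kx}\sim\Gamma(\Delta_k,1)$ (desired link) and $g_{kx}\sim\Gamma(\Psi_k,1)$ (interfering link), all mutually independent and independent of the point processes. $\mathrm{SIR}(x_k)=\dfrac{P_kh_{kx_k}\|x_k\|^{-\alpha}}{\sum_{j\in\mathcal{K}}\sum_{y\in\Phi_j\setminus\{x_k\}}P_jg_{jy}\|y\|^{-\alpha}}$ for $x_k\in\Phi_k$, and the open access coverage probability is $\mathbb{P}\big(\bigcup_{k\in\mathcal{K}}\{\max_{x_k\in\Phi_k}\mathrm{SIR}(x_k)>\beta_k\}\big)$. $\Gamma(a,1)$ is the Gamma distribution with shape $a$, scale $1$. *)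

theory Defs
  imports "HOL-Probability.Probability"
begin

type_synonym point = "real ^ 2"

text \<open>A configuration of the K-tier network: tier k (for k in 1..K) is the set of
  base station locations phi k; tiers outside 1..K are empty.  Locally finite.\<close>
type_synonym config = "nat \<Rightarrow> point set"

definition lf_configs :: "nat \<Rightarrow> config set" where
  "lf_configs K = {\<phi>. (\<forall>k. k \<notin> {1..K} \<longrightarrow> \<phi> k = {}) \<and>
                        (\<forall>k B. bounded B \<longrightarrow> finite (\<phi> k \<inter> B))}"

definition config_space :: "nat \<Rightarrow> config measure" where
  "config_space K = sigma (lf_configs K)
     {{\<phi> \<in> lf_configs K. card (\<phi> k \<inter> B) = n} | k B n. B \<in> sets borel \<and> bounded B}"

definition stationary :: "nat \<Rightarrow> config measure \<Rightarrow> bool" where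
  "stationary K Q \<longleftrightarrow> (\<forall>v::point. distr Q (config_space K) (\<lambda>\<phi> k. (\<lambda>x. v + x) ` \<phi> k) = Q)"

text \<open>Gamma(a,1) distribution for positive integer shape a (= Erlang).\<close>
definition gamma_dist :: "nat \<Rightarrow> real measure" where
  "gamma_dist a = density lborel (erlang_density (a - 1) 1)"

definition bs_index :: "nat \<Rightarrow> config \<Rightarrow> (nat \<times> point) set" where
  "bs_index K \<phi> = {(k, x). k \<in> {1..K} \<and> x \<in> \<phi> k}"

text \<open>Marks of the BSs of a given configuration: at BS (k,x) the pair
  (h_kx, g_kx) with h ~ Gamma(Delta_k,1), g ~ Gamma(Psi_k,1), all independent.\<close>
definition mark_measure ::
  "nat \<Rightarrow> (nat \<Rightarrow> nat) \<Rightarrow> (nat \<Rightarrow> nat) \<Rightarrow> config \<Rightarrow> ((nat \<times> point) \<Rightarrow> real \<times> real) measure" where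
  "mark_measure K Mant Psi \<phi> =
     PiM (bs_index K \<phi>) (\<lambda>(k, x). gamma_dist (Mant k - Psi k + 1) \<Otimes>\<^sub>M gamma_dist (Psi k))"

definition SIR ::
  "nat \<Rightarrow> real \<Rightarrow> (nat \<Rightarrow> real) \<Rightarrow> config \<Rightarrow> ((nat \<times> point) \<Rightarrow> real \<times> real) \<Rightarrow> nat \<Rightarrow> point \<Rightarrow> ennreal" where
  "SIR K \<alpha> P \<phi> \<omega> k x =
     ennreal (P k * fst (\<omega> (k, x)) * norm x powr (- \<alpha>)) /
     (\<integral>\<^sup>+ jy. ennreal (P (fst jy) * snd (\<omega> jy) * norm (snd jy) powr (- \<alpha>))
        \<partial>count_space {(j, y). j \<in> {1..K} \<and> y \<in> \<phi> j \<and> y \<noteq> x})"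

definition covered ::
  "nat \<Rightarrow> real \<Rightarrow> (nat \<Rightarrow> real) \<Rightarrow> (nat \<Rightarrow> real) \<Rightarrow> config \<Rightarrow> ((nat \<times> point) \<Rightarrow> real \<times> real) \<Rightarrow> bool" where
  "covered K \<alpha> P \<beta> \<phi> \<omega> \<longleftrightarrow> (\<exists>k\<in>{1..K}. \<exists>x\<in>\<phi> k. SIR K \<alpha> P \<phi> \<omega> k x > ennreal (\<beta> k))"

text \<open>Open access coverage probability: marks are independent of the point
  processes, so it is the average over the configuration law Q of the conditional
  coverage probability given the configuration.\<close>
definition coverage_prob ::
  "nat \<Rightarrow> real \<Rightarrow> (nat \<Rightarrow> real) \<Rightarrow> (nat \<Rightarrow> real) \<Rightarrow> (nat \<Rightarrow> nat) \<Rightarrow> (nat \<Rightarrow> nat) \<Rightarrow> config measure \<Rightarrow> ennreal" where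
  "coverage_prob K \<alpha> P \<beta> Mant Psi Q =
     (\<integral>\<^sup>+ \<phi>. ennreal (measure (mark_measure K Mant Psi \<phi>)
        {\<omega> \<in> space (mark_measure K Mant Psi \<phi>). covered K \<alpha> P \<beta> \<phi> \<omega>}) \<partial>Q)"

end

theory Submission
  imports Defs
begin

text \<open>
  The comparison holds for every fixed configuration of base stations. Given a configuration, couple the
  marks of the two networks at each base station: with independent
  \<open>A \<sim> \<Gamma>(M - \<Psi>' + 1)\<close>, \<open>B \<sim> \<Gamma>(\<Psi>)\<close> and \<open>W, W' \<sim> \<Gamma>(\<Psi>' - \<Psi>)\<close>, the first network
  sees \<open>(h, g) = (A + W, B)\<close> and the second \<open>(h', g') = (A, B + W')\<close>, which have the right
  laws because Gamma distributions with a common scale add. Pointwise \<open>h \<ge> h'\<close> and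
  \<open>g \<le> g'\<close>, so every SIR of the first network dominates the corresponding SIR of the
  second, and coverage of the second implies coverage of the first.
\<close>

lemma AE_pair_snd:
  assumes "prob_space M" "prob_space N" and [measurable]: "Measurable.pred N P"
    and "AE y in N. P y"
  shows "AE x in M \<Otimes>\<^sub>M N. P (snd x)"
proof -
  interpret pair_prob_space M N
    using assms(1,2) by (simp add: pair_prob_space_def pair_sigma_finite_def prob_space_imp_sigma_finite)
  show ?thesis
    by (rule AE_pair_measure) (use assms(4) in auto)
qed

lemma measurable_compose_PiM:
  assumes "\<And>i. i \<in> I \<Longrightarrow> f \<in> M i \<rightarrow>\<^sub>M M' i"
  shows "compose I f \<in> PiM I M \<rightarrow>\<^sub>M PiM I M'"
  unfolding compose_def
  by (rule measurable_restrict) (use assms in \<open>auto intro: measurable_compose[OF measurable_component_singleton]\<close>)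

lemma distr_PiM_compose:
  assumes M: "\<And>i. i \<in> I \<Longrightarrow> prob_space (M i)"
    and f: "\<And>i. i \<in> I \<Longrightarrow> f \<in> M i \<rightarrow>\<^sub>M M' i"
  shows "distr (PiM I M) (PiM I M') (compose I f) = PiM I (\<lambda>i. distr (M i) (M' i) f)"
proof (rule measure_eqI_PiM_infinite[symmetric])
  let ?D = "\<lambda>i. distr (M i) (M' i) f"
  have F: "compose I f \<in> PiM I M \<rightarrow>\<^sub>M PiM I M'"
    using f by (rule measurable_compose_PiM)
  have sets_D: "sets (PiM I ?D) = sets (PiM I M')"
    by (auto intro!: sets_PiM_cong)
  then show "sets (distr (PiM I M) (PiM I M') (compose I f)) = sets (PiM I ?D)"
    by simp
  show "finite_measure (PiM I ?D)"
  proof -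
    have "prob_space (PiM I ?D)"
      using M f by (auto intro!: prob_space_PiM prob_space.prob_space_distr)
    then show ?thesis by (simp add: prob_space_def)
  qed
  fix A J assume J: "finite J" "J \<subseteq> I" and A: "\<And>i. i \<in> J \<Longrightarrow> A i \<in> sets (?D i)"
  have A': "\<And>i. i \<in> J \<Longrightarrow> A i \<in> sets (M' i)" using A by simp
  have "emeasure (PiM I ?D) (prod_emb I ?D J (Pi\<^sub>E J A)) = (\<Prod>j\<in>J. emeasure (?D j) (A j))"
    using J A M f by (intro emeasure_PiM_emb prob_space.prob_space_distr) auto
  also have "\<dots> = (\<Prod>j\<in>J. emeasure (M j) (f -` A j \<inter> space (M j)))"
    using J A' f by (intro prod.cong refl emeasure_distr) auto
  also have "\<dots> = emeasure (PiM I M) (prod_emb I M J (Pi\<^sub>E J (\<lambda>j. f -` A j \<inter> space (M j))))"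
    using J A' f M by (intro emeasure_PiM_emb[symmetric]) (auto intro!: measurable_sets)
  also have "prod_emb I M J (Pi\<^sub>E J (\<lambda>j. f -` A j \<inter> space (M j)))
      = compose I f -` prod_emb I ?D J (Pi\<^sub>E J A) \<inter> space (PiM I M)"
    using J measurable_space[OF f]
    by (auto simp: prod_emb_def space_PiM PiE_iff compose_def subset_eq)
  also have "emeasure (PiM I M) \<dots> = emeasure (distr (PiM I M) (PiM I M') (compose I f)) (prod_emb I ?D J (Pi\<^sub>E J A))"
    using J A sets_D by (intro emeasure_distr[symmetric] F) (auto intro!: sets_PiM_I simp del: sets_distr)
  finally show "emeasure (PiM I ?D) (prod_emb I ?D J (Pi\<^sub>E J A)) = \<dots>" .
qed simp

lemma measure_Collect_mono_coupling:
  assumes "prob_space N"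
    and F1: "F1 \<in> N \<rightarrow>\<^sub>M M1" and F2: "F2 \<in> N \<rightarrow>\<^sub>M M2"
    and M1: "distr N M1 F1 = M1" and M2: "distr N M2 F2 = M2"
    and sets_eq: "sets M1 = sets M2"
    and mono: "\<And>\<omega>. \<omega> \<in> space N \<Longrightarrow> P (F2 \<omega>) \<Longrightarrow> P (F1 \<omega>)"
  shows "measure M2 {x \<in> space M2. P x} \<le> measure M1 {x \<in> space M1. P x}"
proof (cases "{x \<in> space M2. P x} \<in> sets M2")
  case False
  then show ?thesis by (simp add: measure_notin_sets)
next
  case True
  interpret prob_space N by fact
  let ?E = "{x \<in> space M2. P x}"
  have space_eq: "space M1 = space M2"
    using sets_eq by (rule sets_eq_imp_space_eq)
  have E1: "?E \<in> sets M1"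
    using True sets_eq by simp
  have "measure M2 ?E = measure N (F2 -` ?E \<inter> space N)"
    using measure_distr[OF F2 True] M2 by simp
  also have "\<dots> \<le> measure N (F1 -` ?E \<inter> space N)"
    using mono measurable_space[OF F1] space_eq
    by (intro finite_measure_mono measurable_sets[OF F1 E1]) auto
  also have "\<dots> = measure M1 ?E"
    using measure_distr[OF F1 E1] M1 by simp
  finally show ?thesis
    using space_eq by simp
qed

lemma inverse_antimono_ennreal:
  assumes "(b::ennreal) \<le> c"
  shows "inverse c \<le> inverse b"
proof (cases "b = 0 \<or> c = top")
  case False
  then obtain rb rc where b: "b = ennreal rb" and c: "c = ennreal rc" and "0 < rb" "rb \<le> rc"
    using assms by (cases b; cases c) (auto simp: top_unique)
  then show ?thesis
    by (simp add: inverse_ennreal ennreal_leI le_imp_inverse_le)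
qed auto

lemma divide_left_antimono_ennreal: "(b::ennreal) \<le> c \<Longrightarrow> a / c \<le> a / b"
  unfolding divide_ennreal_def by (intro mult_left_mono inverse_antimono_ennreal) auto

lemma sets_gamma_dist [simp, measurable_cong]: "sets (gamma_dist a) = sets borel"
  by (simp add: gamma_dist_def)

lemma space_gamma_dist [simp]: "space (gamma_dist a) = UNIV"
  by (simp add: gamma_dist_def)

lemma prob_space_gamma_dist: "prob_space (gamma_dist a)"
  unfolding gamma_dist_def by (rule prob_space_erlang_density) simp

lemma AE_gamma_dist_nonneg: "AE x in gamma_dist a. 0 \<le> x"
  unfolding gamma_dist_def
  by (subst AE_density) (auto simp: erlang_density_def split: if_splits)

text \<open>\<open>\<Gamma>(d, 1)\<close> extended to \<open>d = 0\<close> by the point mass at 0. Note that \<open>gamma_dist 0\<close>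
  is not this measure: truncated subtraction makes it \<open>\<Gamma>(1, 1)\<close>.\<close>

definition gamma_dist_ext :: "nat \<Rightarrow> real measure" where
  "gamma_dist_ext d = (if d = 0 then return borel 0 else gamma_dist d)"

lemma sets_gamma_dist_ext [simp, measurable_cong]: "sets (gamma_dist_ext d) = sets borel"
  by (simp add: gamma_dist_ext_def)

lemma space_gamma_dist_ext [simp]: "space (gamma_dist_ext d) = UNIV"
  by (simp add: gamma_dist_ext_def)

lemma prob_space_gamma_dist_ext: "prob_space (gamma_dist_ext d)"
  by (simp add: gamma_dist_ext_def prob_space_gamma_dist prob_space_return)

lemma AE_gamma_dist_ext_nonneg: "AE x in gamma_dist_ext d. 0 \<le> x"
  unfolding gamma_dist_ext_def
  by (auto simp: AE_gamma_dist_nonneg AE_return)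

text \<open>Adding \<open>\<bar>v\<bar>\<close> rather than \<open>v\<close> makes the coupling below monotone everywhere, not just
  almost everywhere.\<close>

definition plus_abs :: "real \<times> real \<Rightarrow> real" where
  "plus_abs = (\<lambda>(u, v). u + \<bar>v\<bar>)"

lemma measurable_plus_abs [measurable]: "plus_abs \<in> borel \<Otimes>\<^sub>M borel \<rightarrow>\<^sub>M borel"
  unfolding plus_abs_def by measurable

lemma distr_gamma_dist_plus_abs:
  assumes "0 < a"
  shows "distr (gamma_dist a \<Otimes>\<^sub>M gamma_dist_ext d) (gamma_dist (a + d)) plus_abs = gamma_dist (a + d)"
proof -
  let ?M = "gamma_dist a \<Otimes>\<^sub>M gamma_dist_ext d"
  have "AE x in ?M. 0 \<le> snd x"
    by (rule AE_pair_snd[OF prob_space_gamma_dist prob_space_gamma_dist_ext _ AE_gamma_dist_ext_nonneg]) simp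
  then have "distr ?M (gamma_dist (a + d)) plus_abs = distr ?M borel (\<lambda>(u, v). u + v)"
    by (intro distr_cong_AE) (auto simp: plus_abs_def elim!: AE_mp)
  also have "\<dots> = gamma_dist (a + d)"
  proof (cases "d = 0")
    case True
    have "AE y in gamma_dist_ext d. y = 0"
      unfolding True gamma_dist_ext_def by (simp add: AE_return)
    then have "AE x in ?M. snd x = 0"
      by (intro AE_pair_snd prob_space_gamma_dist prob_space_gamma_dist_ext) simp_all
    then have "distr ?M borel (\<lambda>(u, v). u + v) = distr ?M (gamma_dist a) fst"
      by (intro distr_cong_AE) (auto elim!: AE_mp)
    also have "\<dots> = gamma_dist (a + d)"
      using prob_space.distr_pair_fst[OF prob_space_gamma_dist_ext] True by simp
    finally show ?thesis .
  next
    case False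
    have "distr ?M borel (\<lambda>(u, v). u + v) = convolution (gamma_dist a) (gamma_dist d)"
      using False by (simp add: convolution_def gamma_dist_ext_def)
    also have "\<dots> = density lborel (\<lambda>x. \<integral>\<^sup>+y. ennreal (erlang_density (a - 1) 1 (x - y)) * ennreal (erlang_density (d - 1) 1 y) \<partial>lborel)"
      unfolding gamma_dist_def
      using prob_space_erlang_density[of 1 "a - 1"] prob_space_erlang_density[of 1 "d - 1"]
      by (intro convolution_density) (auto simp: prob_space_def)
    also have "\<dots> = gamma_dist (a + d)"
      using assms False by (simp add: convolution_erlang_density gamma_dist_def Suc_diff_1)
    finally show ?thesis .
  qed
  finally show ?thesis .
qed

lemma distr_gamma_dist_fst: "distr (gamma_dist a \<Otimes>\<^sub>M gamma_dist_ext d) (gamma_dist a) fst = gamma_dist a"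
  by (rule prob_space.distr_pair_fst[OF prob_space_gamma_dist_ext])

lemma distr_gamma_marks_plus_abs_fst:
  assumes "0 < a"
  shows "distr ((gamma_dist a \<Otimes>\<^sub>M gamma_dist_ext d) \<Otimes>\<^sub>M (gamma_dist b \<Otimes>\<^sub>M gamma_dist_ext e))
      (gamma_dist (a + d) \<Otimes>\<^sub>M gamma_dist b) (\<lambda>(h, g). (plus_abs h, fst g))
    = gamma_dist (a + d) \<Otimes>\<^sub>M gamma_dist b"
  using pair_measure_distr[of plus_abs "gamma_dist a \<Otimes>\<^sub>M gamma_dist_ext d" "gamma_dist (a + d)"
      fst "gamma_dist b \<Otimes>\<^sub>M gamma_dist_ext e" "gamma_dist b"]
  by (simp add: distr_gamma_dist_plus_abs[OF assms] distr_gamma_dist_fst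
      prob_space_imp_sigma_finite prob_space_gamma_dist)

lemma distr_gamma_marks_fst_plus_abs:
  assumes "0 < b"
  shows "distr ((gamma_dist a \<Otimes>\<^sub>M gamma_dist_ext d) \<Otimes>\<^sub>M (gamma_dist b \<Otimes>\<^sub>M gamma_dist_ext e))
      (gamma_dist a \<Otimes>\<^sub>M gamma_dist (b + e)) (\<lambda>(h, g). (fst h, plus_abs g))
    = gamma_dist a \<Otimes>\<^sub>M gamma_dist (b + e)"
  using pair_measure_distr[of fst "gamma_dist a \<Otimes>\<^sub>M gamma_dist_ext d" "gamma_dist a"
      plus_abs "gamma_dist b \<Otimes>\<^sub>M gamma_dist_ext e" "gamma_dist (b + e)"]
  by (simp add: distr_gamma_dist_plus_abs[OF assms] distr_gamma_dist_fst
      prob_space_imp_sigma_finite prob_space_gamma_dist)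

lemma SIR_mono:
  assumes P_pos: "\<And>k. k \<in> {1..K} \<Longrightarrow> P k > 0"
    and h: "\<And>k x. k \<in> {1..K} \<Longrightarrow> x \<in> \<phi> k \<Longrightarrow> fst (\<omega>' (k, x)) \<le> fst (\<omega> (k, x))"
    and g: "\<And>k x. k \<in> {1..K} \<Longrightarrow> x \<in> \<phi> k \<Longrightarrow> snd (\<omega> (k, x)) \<le> snd (\<omega>' (k, x))"
    and k: "k \<in> {1..K}" and x: "x \<in> \<phi> k"
  shows "SIR K \<alpha> P \<phi> \<omega>' k x \<le> SIR K \<alpha> P \<phi> \<omega> k x"
proof -
  let ?S = "{(j, y). j \<in> {1..K} \<and> y \<in> \<phi> j \<and> y \<noteq> x}"
  have signal: "ennreal (P k * fst (\<omega>' (k, x)) * norm x powr (- \<alpha>))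
      \<le> ennreal (P k * fst (\<omega> (k, x)) * norm x powr (- \<alpha>))"
    using P_pos[OF k] h[OF k x] by (intro ennreal_leI mult_right_mono mult_left_mono) auto
  have interference:
    "(\<integral>\<^sup>+ jy. ennreal (P (fst jy) * snd (\<omega> jy) * norm (snd jy) powr (- \<alpha>)) \<partial>count_space ?S)
      \<le> (\<integral>\<^sup>+ jy. ennreal (P (fst jy) * snd (\<omega>' jy) * norm (snd jy) powr (- \<alpha>)) \<partial>count_space ?S)"
    using P_pos[THEN less_imp_le] g by (intro nn_integral_mono ennreal_leI mult_right_mono mult_left_mono) auto
  show ?thesis
    unfolding SIR_def
    by (rule order_trans[OF divide_right_mono_ennreal[OF signal] divide_left_antimono_ennreal[OF interference]])
qed

lemma covered_mono:
  assumes P_pos: "\<And>k. k \<in> {1..K} \<Longrightarrow> P k > 0"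
    and h: "\<And>k x. k \<in> {1..K} \<Longrightarrow> x \<in> \<phi> k \<Longrightarrow> fst (\<omega>' (k, x)) \<le> fst (\<omega> (k, x))"
    and g: "\<And>k x. k \<in> {1..K} \<Longrightarrow> x \<in> \<phi> k \<Longrightarrow> snd (\<omega> (k, x)) \<le> snd (\<omega>' (k, x))"
    and "covered K \<alpha> P \<beta> \<phi> \<omega>'"
  shows "covered K \<alpha> P \<beta> \<phi> \<omega>"
proof -
  obtain k x where k: "k \<in> {1..K}" and x: "x \<in> \<phi> k" and SIR': "ennreal (\<beta> k) < SIR K \<alpha> P \<phi> \<omega>' k x"
    using \<open>covered K \<alpha> P \<beta> \<phi> \<omega>'\<close> unfolding covered_def by blast
  note SIR'
  also have "SIR K \<alpha> P \<phi> \<omega>' k x \<le> SIR K \<alpha> P \<phi> \<omega> k x"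
    using P_pos h g k x by (rule SIR_mono)
  finally show ?thesis
    using k x unfolding covered_def by blast
qed

text \<open>In the notation of the proof idea, the coordinates at a base station are \<open>((A, W), (B, W'))\<close>.\<close>

definition coupled_mark_dist ::
  "(nat \<Rightarrow> nat) \<Rightarrow> (nat \<Rightarrow> nat) \<Rightarrow> (nat \<Rightarrow> nat) \<Rightarrow> nat \<Rightarrow> ((real \<times> real) \<times> (real \<times> real)) measure" where
  "coupled_mark_dist Mant Psi Psi' k =
     (gamma_dist (Mant k - Psi' k + 1) \<Otimes>\<^sub>M gamma_dist_ext (Psi' k - Psi k)) \<Otimes>\<^sub>M
     (gamma_dist (Psi k) \<Otimes>\<^sub>M gamma_dist_ext (Psi' k - Psi k))"

definition coupled_marks ::
  "nat \<Rightarrow> (nat \<Rightarrow> nat) \<Rightarrow> (nat \<Rightarrow> nat) \<Rightarrow> (nat \<Rightarrow> nat) \<Rightarrow> config \<Rightarrow> ((nat \<times> point) \<Rightarrow> (real \<times> real) \<times> (real \<times> real)) measure" where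
  "coupled_marks K Mant Psi Psi' \<phi> = PiM (bs_index K \<phi>) (\<lambda>(k, x). coupled_mark_dist Mant Psi Psi' k)"

lemma prob_space_coupled_mark_dist: "prob_space (coupled_mark_dist Mant Psi Psi' k)"
  unfolding coupled_mark_dist_def
  by (intro prob_space_pair prob_space_gamma_dist prob_space_gamma_dist_ext)

lemma sets_coupled_mark_dist [measurable_cong]:
  "sets (coupled_mark_dist Mant Psi Psi' k) = sets ((borel \<Otimes>\<^sub>M borel) \<Otimes>\<^sub>M (borel \<Otimes>\<^sub>M borel))"
  unfolding coupled_mark_dist_def by (intro sets_pair_measure_cong) auto

lemma distr_coupled_marks_fewer_users:
  assumes "\<And>k. k \<in> {1..K} \<Longrightarrow> Psi k \<le> Psi' k"
    and "\<And>k. k \<in> {1..K} \<Longrightarrow> Psi' k \<le> Mant k"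
  shows "distr (coupled_marks K Mant Psi Psi' \<phi>) (mark_measure K Mant Psi \<phi>)
      (compose (bs_index K \<phi>) (\<lambda>(h, g). (plus_abs h, fst g))) = mark_measure K Mant Psi \<phi>"
proof -
  let ?I = "bs_index K \<phi>"
  let ?N = "\<lambda>(k, x::point). coupled_mark_dist Mant Psi Psi' k"
  let ?M = "\<lambda>(k, x::point). gamma_dist (Mant k - Psi k + 1) \<Otimes>\<^sub>M gamma_dist (Psi k)"
  let ?f = "\<lambda>(h, g). (plus_abs h, fst g :: real)"
  have "distr (PiM ?I ?N) (PiM ?I ?M) (compose ?I ?f) = PiM ?I (\<lambda>i. distr (?N i) (?M i) ?f)"
    by (rule distr_PiM_compose; clarsimp simp: prob_space_coupled_mark_dist; measurable)
  also have "\<dots> = PiM ?I ?M"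
  proof (rule PiM_cong[OF refl])
    fix i assume "i \<in> ?I"
    then obtain k x where i: "i = (k, x)" and k: "k \<in> {1..K}"
      by (auto simp: bs_index_def)
    have "Mant k - Psi' k + 1 + (Psi' k - Psi k) = Mant k - Psi k + 1"
      using assms[OF k] by simp
    then show "distr (?N i) (?M i) ?f = ?M i"
      using distr_gamma_marks_plus_abs_fst[of "Mant k - Psi' k + 1" "Psi' k - Psi k" "Psi k" "Psi' k - Psi k"]
      by (simp add: i coupled_mark_dist_def)
  qed
  finally show ?thesis
    unfolding coupled_marks_def mark_measure_def .
qed

lemma distr_coupled_marks_more_users:
  assumes "\<And>k. k \<in> {1..K} \<Longrightarrow> 0 < Psi k"
    and "\<And>k. k \<in> {1..K} \<Longrightarrow> Psi k \<le> Psi' k"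
  shows "distr (coupled_marks K Mant Psi Psi' \<phi>) (mark_measure K Mant Psi' \<phi>)
      (compose (bs_index K \<phi>) (\<lambda>(h, g). (fst h, plus_abs g))) = mark_measure K Mant Psi' \<phi>"
proof -
  let ?I = "bs_index K \<phi>"
  let ?N = "\<lambda>(k, x::point). coupled_mark_dist Mant Psi Psi' k"
  let ?M = "\<lambda>(k, x::point). gamma_dist (Mant k - Psi' k + 1) \<Otimes>\<^sub>M gamma_dist (Psi' k)"
  let ?f = "\<lambda>(h, g). (fst h :: real, plus_abs g)"
  have "distr (PiM ?I ?N) (PiM ?I ?M) (compose ?I ?f) = PiM ?I (\<lambda>i. distr (?N i) (?M i) ?f)"
    by (rule distr_PiM_compose; clarsimp simp: prob_space_coupled_mark_dist; measurable)
  also have "\<dots> = PiM ?I ?M"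
  proof (rule PiM_cong[OF refl])
    fix i assume "i \<in> ?I"
    then obtain k x where i: "i = (k, x)" and k: "k \<in> {1..K}"
      by (auto simp: bs_index_def)
    have "Psi k + (Psi' k - Psi k) = Psi' k"
      using assms(2)[OF k] by simp
    then show "distr (?N i) (?M i) ?f = ?M i"
      using distr_gamma_marks_fst_plus_abs[OF assms(1)[OF k], of "Mant k - Psi' k + 1" "Psi' k - Psi k" "Psi' k - Psi k"]
      by (simp add: i coupled_mark_dist_def)
  qed
  finally show ?thesis
    unfolding coupled_marks_def mark_measure_def .
qed

lemma coverage_given_config_antimono:
  assumes P_pos: "\<And>k. k \<in> {1..K} \<Longrightarrow> P k > 0"
    and "\<And>k. k \<in> {1..K} \<Longrightarrow> 0 < Psi k"
    and "\<And>k. k \<in> {1..K} \<Longrightarrow> Psi k \<le> Psi' k"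
    and "\<And>k. k \<in> {1..K} \<Longrightarrow> Psi' k \<le> Mant k"
  shows "measure (mark_measure K Mant Psi' \<phi>) {\<omega> \<in> space (mark_measure K Mant Psi' \<phi>). covered K \<alpha> P \<beta> \<phi> \<omega>}
       \<le> measure (mark_measure K Mant Psi \<phi>) {\<omega> \<in> space (mark_measure K Mant Psi \<phi>). covered K \<alpha> P \<beta> \<phi> \<omega>}"
proof (rule measure_Collect_mono_coupling)
  let ?I = "bs_index K \<phi>"
  show "prob_space (coupled_marks K Mant Psi Psi' \<phi>)"
    unfolding coupled_marks_def
    by (auto intro!: prob_space_PiM prob_space_coupled_mark_dist)
  show "compose ?I (\<lambda>(h, g). (plus_abs h, fst g)) \<in> coupled_marks K Mant Psi Psi' \<phi> \<rightarrow>\<^sub>M mark_measure K Mant Psi \<phi>"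
    "compose ?I (\<lambda>(h, g). (fst h, plus_abs g)) \<in> coupled_marks K Mant Psi Psi' \<phi> \<rightarrow>\<^sub>M mark_measure K Mant Psi' \<phi>"
    unfolding coupled_marks_def mark_measure_def
    by (rule measurable_compose_PiM; clarsimp; measurable)+
  show "distr (coupled_marks K Mant Psi Psi' \<phi>) (mark_measure K Mant Psi \<phi>)
      (compose ?I (\<lambda>(h, g). (plus_abs h, fst g))) = mark_measure K Mant Psi \<phi>"
    using assms by (intro distr_coupled_marks_fewer_users)
  show "distr (coupled_marks K Mant Psi Psi' \<phi>) (mark_measure K Mant Psi' \<phi>)
      (compose ?I (\<lambda>(h, g). (fst h, plus_abs g))) = mark_measure K Mant Psi' \<phi>"
    using assms by (intro distr_coupled_marks_more_users)
  show "sets (mark_measure K Mant Psi \<phi>) = sets (mark_measure K Mant Psi' \<phi>)"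
    unfolding mark_measure_def by (intro sets_PiM_cong) auto
  fix \<omega> :: "nat \<times> point \<Rightarrow> (real \<times> real) \<times> (real \<times> real)"
  assume covered': "covered K \<alpha> P \<beta> \<phi> (compose ?I (\<lambda>(h, g). (fst h, plus_abs g)) \<omega>)"
  show "covered K \<alpha> P \<beta> \<phi> (compose ?I (\<lambda>(h, g). (plus_abs h, fst g)) \<omega>)"
    by (rule covered_mono[OF P_pos _ _ covered'])
      (auto simp: compose_def bs_index_def plus_abs_def split_beta)
qed

theorem corollary1:
  fixes K :: nat and \<alpha> :: real and P \<beta> :: "nat \<Rightarrow> real"
    and Mant Psi Psi' :: "nat \<Rightarrow> nat" and Q :: "config measure"
  assumes "prob_space Q"
    and "sets Q = sets (config_space K)"
    and "stationary K Q"
    and "\<And>k. k \<in> {1..K} \<Longrightarrow> P k > 0"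
    and "\<And>k. k \<in> {1..K} \<Longrightarrow> \<beta> k > 0"
    and "\<And>k. k \<in> {1..K} \<Longrightarrow> 0 < Psi k"
    and "\<And>k. k \<in> {1..K} \<Longrightarrow> Psi k \<le> Psi' k"
    and "\<And>k. k \<in> {1..K} \<Longrightarrow> Psi' k \<le> Mant k"
  shows "coverage_prob K \<alpha> P \<beta> Mant Psi Q \<ge> coverage_prob K \<alpha> P \<beta> Mant Psi' Q"
  unfolding coverage_prob_def
  by (intro nn_integral_mono ennreal_leI coverage_given_config_antimono[OF assms(4,6,7,8)])

end
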